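(* Let $T=(V,E)$ be a tree with $\mathrm{pthin}(T)=2$, and let $\sigma$ be an ordering of $V$ and $S=\{V^0,V^1\}$ a partition of $V$ that are strongly consistent. Let $v_0\in V^0$ and $v_1\in V^1$ be adjacent. Let $u$ be a vertex that is before the edge $v_0v_1$ and $w$ a vertex that is after the edge $v_0v_1$. Then every path in $T$ from $u$ to $w$ contains $v_0$ or $v_1$.
   Context: For a graph $G=(V,E)$, a linear ordering $<$ of $V$ and a partition of $V$ into classes are called strongly consistent if for every triple $r<s<t$ of vertices with $rt\in E$: if $r$ and $s$ belong to the same class then $st\in E$, and if $s$ and $t$ belong to the same class then $rs\in E$. The proper thinness $\mathrm{pthin}(G)$ is the minimum $k$ such that some ordering and some partition into $k$ classes are strongly consistent. For adjacent $v_0\in V^0$, $v_1\in V^1$ and a vertex $u\notin\{v_0,v_1\}$: $u$ is before the edge $v_0v_1$ if either ($u\in V^0$ and $u<v_0$) or ($u\in V^1$ and $u<v_1$); $u$ is after the edge $v_0v_1$ if either ($u\in V^0$ and $v_0<u$) or ($u\in V^1$ and $v_1<u$). *)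

theory Defs
  imports Main
begin

definition simple_graph :: "'a set \<Rightarrow> ('a \<Rightarrow> 'a \<Rightarrow> bool) \<Rightarrow> bool" where
  "simple_graph V E \<longleftrightarrow> finite V \<and> (\<forall>x y. E x y \<longrightarrow> x \<in> V \<and> y \<in> V)
     \<and> (\<forall>x y. E x y \<longrightarrow> E y x) \<and> (\<forall>x. \<not> E x x)"

definition is_walk :: "'a set \<Rightarrow> ('a \<Rightarrow> 'a \<Rightarrow> bool) \<Rightarrow> 'a list \<Rightarrow> bool" where
  "is_walk V E xs \<longleftrightarrow> xs \<noteq> [] \<and> set xs \<subseteq> V \<and>
     (\<forall>i. Suc i < length xs \<longrightarrow> E (xs ! i) (xs ! Suc i))"

definition is_path :: "'a set \<Rightarrow> ('a \<Rightarrow> 'a \<Rightarrow> bool) \<Rightarrow> 'a list \<Rightarrow> bool" where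
  "is_path V E xs \<longleftrightarrow> is_walk V E xs \<and> distinct xs"

definition connected_graph :: "'a set \<Rightarrow> ('a \<Rightarrow> 'a \<Rightarrow> bool) \<Rightarrow> bool" where
  "connected_graph V E \<longleftrightarrow> V \<noteq> {} \<and>
     (\<forall>x\<in>V. \<forall>y\<in>V. \<exists>xs. is_path V E xs \<and> hd xs = x \<and> last xs = y)"

definition acyclic_graph :: "'a set \<Rightarrow> ('a \<Rightarrow> 'a \<Rightarrow> bool) \<Rightarrow> bool" where
  "acyclic_graph V E \<longleftrightarrow>
     \<not> (\<exists>xs. is_path V E xs \<and> length xs \<ge> 3 \<and> E (last xs) (hd xs))"

definition is_tree :: "'a set \<Rightarrow> ('a \<Rightarrow> 'a \<Rightarrow> bool) \<Rightarrow> bool" where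
  "is_tree V E \<longleftrightarrow> simple_graph V E \<and> connected_graph V E \<and> acyclic_graph V E"

text \<open>A linear ordering of V is represented by an injective numbering
  ord :: 'a \<Rightarrow> nat on V; x < y iff ord x < ord y.\<close>
definition is_partition :: "'a set \<Rightarrow> 'a set set \<Rightarrow> bool" where
  "is_partition V P \<longleftrightarrow> (\<forall>X\<in>P. X \<noteq> {}) \<and> \<Union>P = V \<and>
     (\<forall>X\<in>P. \<forall>Y\<in>P. X \<noteq> Y \<longrightarrow> X \<inter> Y = {})"

definition same_class :: "'a set set \<Rightarrow> 'a \<Rightarrow> 'a \<Rightarrow> bool" where
  "same_class P x y \<longleftrightarrow> (\<exists>X\<in>P. x \<in> X \<and> y \<in> X)"

definition strongly_consistent ::
  "'a set \<Rightarrow> ('a \<Rightarrow> 'a \<Rightarrow> bool) \<Rightarrow> ('a \<Rightarrow> nat) \<Rightarrow> 'a set set \<Rightarrow> bool" where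
  "strongly_consistent V E ord P \<longleftrightarrow>
     (\<forall>r\<in>V. \<forall>s\<in>V. \<forall>t\<in>V. ord r < ord s \<and> ord s < ord t \<and> E r t \<longrightarrow>
        (same_class P r s \<longrightarrow> E s t) \<and> (same_class P s t \<longrightarrow> E r s))"

definition pthin :: "'a set \<Rightarrow> ('a \<Rightarrow> 'a \<Rightarrow> bool) \<Rightarrow> nat" where
  "pthin V E = (LEAST k. \<exists>ord P. inj_on ord V \<and> is_partition V P \<and> card P = k
                           \<and> strongly_consistent V E ord P)"

definition before_edge ::
  "('a \<Rightarrow> nat) \<Rightarrow> 'a set \<Rightarrow> 'a set \<Rightarrow> 'a \<Rightarrow> 'a \<Rightarrow> 'a \<Rightarrow> bool" where
  "before_edge ord V0 V1 v0 v1 u \<longleftrightarrow> u \<notin> {v0, v1} \<and>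
     ((u \<in> V0 \<and> ord u < ord v0) \<or> (u \<in> V1 \<and> ord u < ord v1))"

definition after_edge ::
  "('a \<Rightarrow> nat) \<Rightarrow> 'a set \<Rightarrow> 'a set \<Rightarrow> 'a \<Rightarrow> 'a \<Rightarrow> 'a \<Rightarrow> bool" where
  "after_edge ord V0 V1 v0 v1 u \<longleftrightarrow> u \<notin> {v0, v1} \<and>
     ((u \<in> V0 \<and> ord v0 < ord u) \<or> (u \<in> V1 \<and> ord v1 < ord u))"

end

theory Submission
  imports Defs
begin

text \<open>A path from a vertex before the edge \<open>v\<^sub>0v\<^sub>1\<close> to a vertex after it must, if it
  avoids \<open>v\<^sub>0\<close> and \<open>v\<^sub>1\<close>, contain an edge \<open>ab\<close> from a vertex before the edge to a
  vertex after it. Strong consistency then forces further edges: if \<open>a\<close>, \<open>b\<close> lie in the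
  class of \<open>v\<^sub>i\<close> with \<open>a < v\<^sub>i < b\<close>, both \<open>av\<^sub>i\<close> and \<open>v\<^sub>ib\<close> are edges, a triangle; if
  \<open>a\<close> lies in the class of \<open>v\<^sub>0\<close> and \<open>b\<close> in that of \<open>v\<^sub>1\<close>, then \<open>av\<^sub>1\<close> and \<open>v\<^sub>0b\<close> are
  edges, closing the 4-cycle \<open>a v\<^sub>1 v\<^sub>0 b\<close>. Both contradict acyclicity.\<close>

lemma acyclic_no_triangle:
  assumes "acyclic_graph V E" "x \<in> V" "y \<in> V" "z \<in> V" "distinct [x, y, z]"
    "E x y" "E y z" "E z x"
  shows False
proof -
  have "is_path V E [x, y, z]"
    unfolding is_path_def is_walk_def using assms
    by (auto simp: less_Suc_eq nth_Cons split: nat.splits)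
  then show False using assms(1,8) unfolding acyclic_graph_def by force
qed

lemma acyclic_no_square:
  assumes "acyclic_graph V E" "x \<in> V" "y \<in> V" "z \<in> V" "t \<in> V" "distinct [x, y, z, t]"
    "E x y" "E y z" "E z t" "E t x"
  shows False
proof -
  have "is_path V E [x, y, z, t]"
    unfolding is_path_def is_walk_def using assms
    by (auto simp: less_Suc_eq nth_Cons split: nat.splits)
  then show False using assms(1,10) unfolding acyclic_graph_def by force
qed

lemma exists_adjacent_change:
  assumes "xs \<noteq> []" "P (hd xs)" "\<not> P (last xs)"
  shows "\<exists>i. Suc i < length xs \<and> P (xs ! i) \<and> \<not> P (xs ! Suc i)"
  using assms
proof (induction xs)
  case Nil
  then show ?case by simp
next
  case (Cons x xs)
  then have "xs \<noteq> []" by auto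
  show ?case
  proof (cases "P (hd xs)")
    case True
    with Cons \<open>xs \<noteq> []\<close> obtain i where "Suc i < length xs" "P (xs ! i)" "\<not> P (xs ! Suc i)"
      by auto
    then show ?thesis by (intro exI[of _ "Suc i"]) auto
  next
    case False
    with Cons \<open>xs \<noteq> []\<close> show ?thesis by (intro exI[of _ 0]) (auto simp: hd_conv_nth)
  qed
qed

lemma strongly_consistent_right_edge:
  assumes "strongly_consistent V E ord P" "r \<in> V" "s \<in> V" "t \<in> V"
    "ord r < ord s" "ord s < ord t" "E r t" "same_class P r s"
  shows "E s t"
  using assms unfolding strongly_consistent_def by blast

lemma strongly_consistent_left_edge:
  assumes "strongly_consistent V E ord P" "r \<in> V" "s \<in> V" "t \<in> V"
    "ord r < ord s" "ord s < ord t" "E r t" "same_class P s t"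
  shows "E r s"
  using assms unfolding strongly_consistent_def by blast

lemma simple_graph_sym: "simple_graph V E \<Longrightarrow> E x y \<Longrightarrow> E y x"
  unfolding simple_graph_def by blast

lemma simple_graph_edge_in_V: "simple_graph V E \<Longrightarrow> E x y \<Longrightarrow> x \<in> V \<and> y \<in> V"
  unfolding simple_graph_def by blast

lemma strongly_consistent_acyclic_no_edge_over_class:
  assumes sg: "simple_graph V E" and ac: "acyclic_graph V E"
    and sc: "strongly_consistent V E ord P" and "X \<in> P"
    and "a \<in> X" "v \<in> X" "b \<in> X" "v \<in> V"
    and av: "ord a < ord v" and vb: "ord v < ord b"
  shows "\<not> E a b"
proof
  assume ab: "E a b"
  have V: "a \<in> V" "b \<in> V" using simple_graph_edge_in_V[OF sg ab] by auto
  have "same_class P a v" "same_class P v b"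
    using assms unfolding same_class_def by auto
  then have "E a v" "E v b"
    using strongly_consistent_left_edge[OF sc V(1) \<open>v \<in> V\<close> V(2) av vb ab]
      strongly_consistent_right_edge[OF sc V(1) \<open>v \<in> V\<close> V(2) av vb ab]
    by auto
  moreover have "distinct [a, v, b]" using av vb by auto
  ultimately show False
    using acyclic_no_triangle[OF ac V(1) \<open>v \<in> V\<close> V(2)] simple_graph_sym[OF sg ab] by auto
qed

lemma strongly_consistent_acyclic_no_crossing_edge:
  assumes sg: "simple_graph V E" and ac: "acyclic_graph V E" and inj: "inj_on ord V"
    and sc: "strongly_consistent V E ord P" and XY: "X \<in> P" "Y \<in> P" "X \<inter> Y = {}"
    and "v0 \<in> X" "v1 \<in> Y" and adj: "E v0 v1"
    and "a \<in> X" "b \<in> Y" and av0: "ord a < ord v0" and v1b: "ord v1 < ord b"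
  shows "\<not> E a b"
proof
  assume ab: "E a b"
  have V: "a \<in> V" "b \<in> V" "v0 \<in> V" "v1 \<in> V"
    using simple_graph_edge_in_V[OF sg ab] simple_graph_edge_in_V[OF sg adj] by auto
  have distinct: "distinct [a, v1, v0, b]"
    using XY(3) \<open>a \<in> X\<close> \<open>b \<in> Y\<close> \<open>v0 \<in> X\<close> \<open>v1 \<in> Y\<close> av0 v1b by auto
  have cls: "same_class P a v0" "same_class P v1 b"
    using assms unfolding same_class_def by auto
  have "E a v1"
  proof (cases "ord a < ord v1")
    case True
    then show ?thesis using strongly_consistent_left_edge[OF sc V(1,4,2) _ v1b ab cls(2)] by simp
  next
    case False
    moreover have "ord a \<noteq> ord v1" using inj_on_contraD[OF inj] V distinct by auto
    ultimately have "ord v1 < ord a" by simp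
    then have "E v1 a"
      using strongly_consistent_left_edge[OF sc V(4,1,3) _ av0 simple_graph_sym[OF sg adj] cls(1)]
      by simp
    then show ?thesis using simple_graph_sym[OF sg] by blast
  qed
  moreover have "E v0 b"
  proof (cases "ord v0 < ord b")
    case True
    then show ?thesis using strongly_consistent_right_edge[OF sc V(1,3,2) av0 _ ab cls(1)] by simp
  next
    case False
    moreover have "ord b \<noteq> ord v0" using inj_on_contraD[OF inj] V distinct by auto
    ultimately have "ord b < ord v0" by simp
    then have "E b v0"
      using strongly_consistent_right_edge[OF sc V(4,2,3) v1b _ simple_graph_sym[OF sg adj] cls(2)]
      by simp
    then show ?thesis using simple_graph_sym[OF sg] by blast
  qed
  ultimately show False
    using acyclic_no_square[OF ac V(1,4,3,2) distinct] simple_graph_sym[OF sg adj]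
      simple_graph_sym[OF sg ab] by blast
qed

lemma no_edge_from_before_to_after:
  assumes sg: "simple_graph V E" and ac: "acyclic_graph V E" and inj: "inj_on ord V"
    and sc: "strongly_consistent V E ord {V0, V1}" and disj: "V0 \<inter> V1 = {}"
    and v0: "v0 \<in> V0" and v1: "v1 \<in> V1" and adj: "E v0 v1"
    and a: "before_edge ord V0 V1 v0 v1 a" and b: "after_edge ord V0 V1 v0 v1 b"
  shows "\<not> E a b"
proof -
  have "v0 \<in> V" "v1 \<in> V" using simple_graph_edge_in_V[OF sg adj] by auto
  have disj': "V1 \<inter> V0 = {}" using disj by auto
  have "(a \<in> V0 \<and> ord a < ord v0) \<or> (a \<in> V1 \<and> ord a < ord v1)"
    and "(b \<in> V0 \<and> ord v0 < ord b) \<or> (b \<in> V1 \<and> ord v1 < ord b)"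
    using a b unfolding before_edge_def after_edge_def by auto
  then consider
      "a \<in> V0" "ord a < ord v0" "b \<in> V0" "ord v0 < ord b"
    | "a \<in> V1" "ord a < ord v1" "b \<in> V1" "ord v1 < ord b"
    | "a \<in> V0" "ord a < ord v0" "b \<in> V1" "ord v1 < ord b"
    | "a \<in> V1" "ord a < ord v1" "b \<in> V0" "ord v0 < ord b"
    by argo
  then show ?thesis
  proof cases
    case 1
    then show ?thesis
      using strongly_consistent_acyclic_no_edge_over_class[OF sg ac sc, of V0 a v0 b] v0 \<open>v0 \<in> V\<close>
      by auto
  next
    case 2
    then show ?thesis
      using strongly_consistent_acyclic_no_edge_over_class[OF sg ac sc, of V1 a v1 b] v1 \<open>v1 \<in> V\<close>
      by auto
  next
    case 3
    then show ?thesis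
      using strongly_consistent_acyclic_no_crossing_edge[OF sg ac inj sc _ _ disj v0 v1 adj] by auto
  next
    case 4
    then show ?thesis
      using strongly_consistent_acyclic_no_crossing_edge[OF sg ac inj sc _ _ disj' v1 v0
          simple_graph_sym[OF sg adj]]
      by auto
  qed
qed

lemma not_before_edge_imp_after_edge:
  assumes inj: "inj_on ord V" and "x \<in> V" "v0 \<in> V" "v1 \<in> V" "V \<subseteq> V0 \<union> V1"
    and "x \<notin> {v0, v1}" "\<not> before_edge ord V0 V1 v0 v1 x"
  shows "after_edge ord V0 V1 v0 v1 x"
proof -
  have "ord x \<noteq> ord v0" "ord x \<noteq> ord v1"
    using inj_on_contraD[OF inj] assms by auto
  then show ?thesis using assms unfolding before_edge_def after_edge_def by auto
qed

theorem propositionA4: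
  fixes V :: "'a set" and E :: "'a \<Rightarrow> 'a \<Rightarrow> bool" and ord :: "'a \<Rightarrow> nat"
    and V0 V1 :: "'a set" and v0 v1 u w :: 'a and xs :: "'a list"
  assumes tree: "is_tree V E"
    and pthin2: "pthin V E = 2"
    and ord: "inj_on ord V"
    and part: "is_partition V {V0, V1}" and distinct_classes: "V0 \<noteq> V1"
    and sc: "strongly_consistent V E ord {V0, V1}"
    and v0: "v0 \<in> V0" and v1: "v1 \<in> V1" and adj: "E v0 v1"
    and u: "before_edge ord V0 V1 v0 v1 u"
    and w: "after_edge ord V0 V1 v0 v1 w"
    and path: "is_path V E xs" and start: "hd xs = u" and finish: "last xs = w"
  shows "v0 \<in> set xs \<or> v1 \<in> set xs"
proof (rule ccontr)
  assume avoids: "\<not> (v0 \<in> set xs \<or> v1 \<in> set xs)"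
  have sg: "simple_graph V E" and ac: "acyclic_graph V E" using tree is_tree_def by auto
  have cover: "V = V0 \<union> V1" and disj: "V0 \<inter> V1 = {}"
    using part distinct_classes unfolding is_partition_def by auto
  have walk: "xs \<noteq> []" "set xs \<subseteq> V" "\<And>i. Suc i < length xs \<Longrightarrow> E (xs ! i) (xs ! Suc i)"
    using path unfolding is_path_def is_walk_def by auto
  have "\<not> before_edge ord V0 V1 v0 v1 w"
    using w disj unfolding before_edge_def after_edge_def by auto
  then obtain i where i: "Suc i < length xs" "before_edge ord V0 V1 v0 v1 (xs ! i)"
      "\<not> before_edge ord V0 V1 v0 v1 (xs ! Suc i)"
    using exists_adjacent_change[of xs "before_edge ord V0 V1 v0 v1"] walk start finish u by auto
  have "xs ! Suc i \<in> set xs" using i(1) by simp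
  then have "after_edge ord V0 V1 v0 v1 (xs ! Suc i)"
    using not_before_edge_imp_after_edge[OF ord _ _ _ _ _ i(3)] simple_graph_edge_in_V[OF sg adj]
      walk(2) cover avoids by auto
  then show False
    using no_edge_from_before_to_after[OF sg ac ord sc disj v0 v1 adj i(2)] walk(3)[OF i(1)]
    by blast
qed

end
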